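(* Let $R$ be a ring and $\mathfrak{p}$ a proper left ideal of $R$. Then: (1) $\mathfrak{p}$ is extremely prime iff $(\mathfrak{p}:b)\subseteq\mathfrak{p}$ for all $b\in R\setminus\mathfrak{p}$. (2) $\mathfrak{p}$ is completely prime iff $(\mathfrak{p}:b)=\mathfrak{p}$ for all $b\in R\setminus\mathfrak{p}$ such that $\mathfrak{p}\subseteq(\mathfrak{p}:b)$. (3) $\mathfrak{p}$ is structurally prime iff $\operatorname{id}((\mathfrak{p}:b))\subseteq\mathfrak{p}$ for all $b\in R\setminus\mathfrak{p}$. (4) $\mathfrak{p}$ is weakly prime iff $\operatorname{id}((\mathfrak{p}:b))\subseteq\mathfrak{p}$ for all $b\in R\setminus\mathfrak{p}$ such that $\mathfrak{p}R\subseteq(\mathfrak{p}:b)$.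
   Context: Rings are associative and unital, not necessarily commutative. For a left ideal $I$ and $a\in R$, $(I:a)=\{x\in R: xa\in I\}$ (a left ideal). For a left ideal $I$, $\operatorname{id}(I)$ denotes the largest two-sided ideal of $R$ contained in $I$. A left ideal $\mathfrak{p}\neq R$ is: extremely prime if $ab\in\mathfrak{p}$ implies $a\in\mathfrak{p}$ or $b\in\mathfrak{p}$ (for $a,b\in R$); completely prime if $ab\in\mathfrak{p}$ and $\mathfrak{p}b\subseteq\mathfrak{p}$ imply $a\in\mathfrak{p}$ or $b\in\mathfrak{p}$; structurally prime if for left ideals $A,B$, $AB\subseteq\mathfrak{p}$ implies $A\subseteq\mathfrak{p}$ or $B\subseteq\mathfrak{p}$; weakly prime if for left ideals $A,B$, $AB\subseteq\mathfrak{p}$ and $\mathfrak{p}B\subseteq\mathfrak{p}$ imply $A\subseteq\mathfrak{p}$ or $B\subseteq\mathfrak{p}$. *)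

theory Defs
  imports Main
begin

definition left_ideal :: "'a::ring_1 set \<Rightarrow> bool" where
  "left_ideal I \<longleftrightarrow> 0 \<in> I \<and> (\<forall>x\<in>I. \<forall>y\<in>I. x + y \<in> I) \<and> (\<forall>x\<in>I. - x \<in> I)
     \<and> (\<forall>r. \<forall>x\<in>I. r * x \<in> I)"

definition two_sided_ideal :: "'a::ring_1 set \<Rightarrow> bool" where
  "two_sided_ideal I \<longleftrightarrow> left_ideal I \<and> (\<forall>r. \<forall>x\<in>I. x * r \<in> I)"

inductive_set set_prod :: "'a::ring_1 set \<Rightarrow> 'a set \<Rightarrow> 'a set" for A B where
  zero: "0 \<in> set_prod A B"
| mult: "a \<in> A \<Longrightarrow> b \<in> B \<Longrightarrow> a * b \<in> set_prod A B"
| add: "x \<in> set_prod A B \<Longrightarrow> y \<in> set_prod A B \<Longrightarrow> x + y \<in> set_prod A B"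

definition rmult :: "'a::ring_1 set \<Rightarrow> 'a \<Rightarrow> 'a set" where
  "rmult I b = {x * b | x. x \<in> I}"

definition lcolon :: "'a::ring_1 set \<Rightarrow> 'a \<Rightarrow> 'a set" where
  "lcolon I a = {x. x * a \<in> I}"

text \<open>id(I): the largest two-sided ideal contained in I (the union of all two-sided ideals
  contained in I; it is itself the largest such ideal).\<close>
definition id_part :: "'a::ring_1 set \<Rightarrow> 'a set" where
  "id_part I = \<Union>{J. two_sided_ideal J \<and> J \<subseteq> I}"

definition extremely_prime :: "'a::ring_1 set \<Rightarrow> bool" where
  "extremely_prime P \<longleftrightarrow> left_ideal P \<and> P \<noteq> UNIV \<and>
     (\<forall>a b. a * b \<in> P \<longrightarrow> a \<in> P \<or> b \<in> P)"

definition completely_prime :: "'a::ring_1 set \<Rightarrow> bool" where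
  "completely_prime P \<longleftrightarrow> left_ideal P \<and> P \<noteq> UNIV \<and>
     (\<forall>a b. a * b \<in> P \<longrightarrow> rmult P b \<subseteq> P \<longrightarrow> a \<in> P \<or> b \<in> P)"

definition structurally_prime :: "'a::ring_1 set \<Rightarrow> bool" where
  "structurally_prime P \<longleftrightarrow> left_ideal P \<and> P \<noteq> UNIV \<and>
     (\<forall>A B. left_ideal A \<longrightarrow> left_ideal B \<longrightarrow> set_prod A B \<subseteq> P \<longrightarrow> A \<subseteq> P \<or> B \<subseteq> P)"

definition weakly_prime :: "'a::ring_1 set \<Rightarrow> bool" where
  "weakly_prime P \<longleftrightarrow> left_ideal P \<and> P \<noteq> UNIV \<and>
     (\<forall>A B. left_ideal A \<longrightarrow> left_ideal B \<longrightarrow> set_prod A B \<subseteq> P \<longrightarrow> set_prod P B \<subseteq> P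
        \<longrightarrow> A \<subseteq> P \<or> B \<subseteq> P)"

end

theory Submission
  imports Defs
begin

text \<open>Every condition of the theorem is an element-wise rewriting of the corresponding
  primeness notion, once one observes that a product condition on left ideals only needs to be
  tested against principal left ideals \<open>R b\<close> with \<open>b \<notin> P\<close>. For these, \<open>A (R b) \<subseteq> P\<close> says exactly
  \<open>A R \<subseteq> (P : b)\<close>, and since \<open>A R\<close> is a two-sided ideal containing \<open>A\<close>, the statement
  "\<open>A (R b) \<subseteq> P\<close> forces \<open>A \<subseteq> P\<close>" is equivalent to \<open>id (P : b) \<subseteq> P\<close>.\<close>

definition principal_left_ideal :: "'a::ring_1 \<Rightarrow> 'a set" where
  "principal_left_ideal b = range (\<lambda>r. r * b)"

lemma left_ideal_principal_left_ideal: "left_ideal (principal_left_ideal b)"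
  unfolding left_ideal_def principal_left_ideal_def
proof (intro conjI ballI allI)
  show "0 \<in> range (\<lambda>r. r * b)"
    by (metis mult_zero_left rangeI)
  show "x + y \<in> range (\<lambda>r. r * b)" if "x \<in> range (\<lambda>r. r * b)" "y \<in> range (\<lambda>r. r * b)" for x y
    using that by (auto simp flip: distrib_right)
  show "- x \<in> range (\<lambda>r. r * b)" if "x \<in> range (\<lambda>r. r * b)" for x
    using that by clarify (metis minus_mult_left rangeI)
  show "r * x \<in> range (\<lambda>r. r * b)" if "x \<in> range (\<lambda>r. r * b)" for r x
    using that by (auto simp flip: mult.assoc)
qed

lemma self_in_principal_left_ideal: "b \<in> principal_left_ideal b"
  unfolding principal_left_ideal_def by (metis mult_1 rangeI)

lemma principal_left_ideal_subset:
  "left_ideal B \<Longrightarrow> b \<in> B \<Longrightarrow> principal_left_ideal b \<subseteq> B"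
  unfolding left_ideal_def principal_left_ideal_def by blast

lemma left_ideal_lcolon: "left_ideal P \<Longrightarrow> left_ideal (lcolon P b)"
  unfolding left_ideal_def lcolon_def by (auto simp: distrib_right mult.assoc)

lemma set_prod_subsetI:
  assumes "0 \<in> C" "\<And>x y. x \<in> C \<Longrightarrow> y \<in> C \<Longrightarrow> x + y \<in> C"
    and "\<And>a b. a \<in> A \<Longrightarrow> b \<in> B \<Longrightarrow> a * b \<in> C"
  shows "set_prod A B \<subseteq> C"
proof
  fix x assume "x \<in> set_prod A B"
  then show "x \<in> C" by induction (auto intro: assms)
qed

lemma set_prod_subset_left_ideal:
  "left_ideal C \<Longrightarrow> (\<And>a b. a \<in> A \<Longrightarrow> b \<in> B \<Longrightarrow> a * b \<in> C) \<Longrightarrow> set_prod A B \<subseteq> C"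
  by (rule set_prod_subsetI) (auto simp: left_ideal_def)

lemma set_prod_mono: "A \<subseteq> A' \<Longrightarrow> B \<subseteq> B' \<Longrightarrow> set_prod A B \<subseteq> set_prod A' B'"
  by (rule set_prod_subsetI) (auto intro: set_prod.intros)

lemma subset_set_prod_UNIV: "A \<subseteq> set_prod A UNIV"
  by (metis UNIV_I mult.right_neutral set_prod.mult subsetI)

lemma two_sided_ideal_set_prod_UNIV:
  assumes "left_ideal A"
  shows "two_sided_ideal (set_prod A UNIV)"
proof -
  have closed: "- x \<in> set_prod A UNIV \<and> r * x \<in> set_prod A UNIV \<and> x * r \<in> set_prod A UNIV"
    if "x \<in> set_prod A UNIV" for x r
    using that
  proof induction
    case zero
    then show ?case by (simp add: set_prod.zero)
  next
    case (mult a c)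
    have "r * a \<in> A"
      using assms \<open>a \<in> A\<close> unfolding left_ideal_def by blast
    then have "(r * a) * c \<in> set_prod A UNIV"
      by (simp add: set_prod.mult)
    moreover have "a * (- c) \<in> set_prod A UNIV" "a * (c * r) \<in> set_prod A UNIV"
      using \<open>a \<in> A\<close> by (blast intro: set_prod.mult)+
    ultimately show ?case
      by (simp add: mult.assoc)
  next
    case (add x y)
    then have "- x + - y \<in> set_prod A UNIV" "r * x + r * y \<in> set_prod A UNIV"
      "x * r + y * r \<in> set_prod A UNIV"
      by (blast intro: set_prod.add)+
    then show ?case
      by (simp add: distrib_left distrib_right)
  qed
  show ?thesis
    unfolding two_sided_ideal_def left_ideal_def
    using closed by (blast intro: set_prod.zero set_prod.add)
qed

lemma set_prod_principal_subset_iff: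
  assumes "left_ideal P"
  shows "set_prod X (principal_left_ideal b) \<subseteq> P \<longleftrightarrow> set_prod X UNIV \<subseteq> lcolon P b"
proof
  assume "set_prod X (principal_left_ideal b) \<subseteq> P"
  then show "set_prod X UNIV \<subseteq> lcolon P b"
    by (intro set_prod_subset_left_ideal left_ideal_lcolon assms)
      (auto simp: lcolon_def principal_left_ideal_def mult.assoc intro: set_prod.mult)
next
  assume "set_prod X UNIV \<subseteq> lcolon P b"
  then show "set_prod X (principal_left_ideal b) \<subseteq> P"
    by (intro set_prod_subset_left_ideal assms)
      (auto simp: lcolon_def principal_left_ideal_def mult.assoc[symmetric] intro: set_prod.mult)
qed

lemma two_sided_ideal_subset_lcolon_iff:
  assumes "left_ideal P" "two_sided_ideal J"
  shows "J \<subseteq> lcolon P b \<longleftrightarrow> set_prod J UNIV \<subseteq> lcolon P b"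
proof
  assume "J \<subseteq> lcolon P b"
  moreover have "j * r \<in> J" if "j \<in> J" for j r
    using assms(2) that unfolding two_sided_ideal_def by blast
  ultimately show "set_prod J UNIV \<subseteq> lcolon P b"
    by (intro set_prod_subset_left_ideal left_ideal_lcolon assms(1)) blast
qed (use subset_set_prod_UNIV in blast)

lemma id_part_subset_iff:
  "id_part I \<subseteq> P \<longleftrightarrow> (\<forall>J. two_sided_ideal J \<longrightarrow> J \<subseteq> I \<longrightarrow> J \<subseteq> P)"
  unfolding id_part_def by blast

lemma id_part_lcolon_subset_iff:
  assumes "left_ideal P"
  shows "id_part (lcolon P b) \<subseteq> P \<longleftrightarrow>
    (\<forall>A. left_ideal A \<longrightarrow> set_prod A (principal_left_ideal b) \<subseteq> P \<longrightarrow> A \<subseteq> P)"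
proof
  assume id: "id_part (lcolon P b) \<subseteq> P"
  show "\<forall>A. left_ideal A \<longrightarrow> set_prod A (principal_left_ideal b) \<subseteq> P \<longrightarrow> A \<subseteq> P"
  proof (intro allI impI)
    fix A assume A: "left_ideal A" "set_prod A (principal_left_ideal b) \<subseteq> P"
    have "set_prod A UNIV \<subseteq> lcolon P b"
      using A(2) by (simp add: set_prod_principal_subset_iff[OF assms])
    with two_sided_ideal_set_prod_UNIV[OF A(1)] have "set_prod A UNIV \<subseteq> id_part (lcolon P b)"
      unfolding id_part_def by blast
    with id subset_set_prod_UNIV show "A \<subseteq> P"
      by blast
  qed
next
  assume principal: "\<forall>A. left_ideal A \<longrightarrow> set_prod A (principal_left_ideal b) \<subseteq> P \<longrightarrow> A \<subseteq> P"
  show "id_part (lcolon P b) \<subseteq> P"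
    unfolding id_part_subset_iff
  proof (intro allI impI)
    fix J assume J: "two_sided_ideal J" "J \<subseteq> lcolon P b"
    then have "set_prod J UNIV \<subseteq> lcolon P b"
      by (simp add: two_sided_ideal_subset_lcolon_iff[OF assms])
    then have "set_prod J (principal_left_ideal b) \<subseteq> P"
      by (simp add: set_prod_principal_subset_iff[OF assms])
    moreover have "left_ideal J"
      using J(1) unfolding two_sided_ideal_def by simp
    ultimately show "J \<subseteq> P"
      using principal by blast
  qed
qed

lemma product_condition_principal_iff:
  assumes Q_antimono: "\<And>B B'. left_ideal B \<Longrightarrow> B' \<subseteq> B \<Longrightarrow> Q B \<Longrightarrow> Q B'"
  shows "(\<forall>A B. left_ideal A \<longrightarrow> left_ideal B \<longrightarrow> set_prod A B \<subseteq> P \<longrightarrow> Q B \<longrightarrow> A \<subseteq> P \<or> B \<subseteq> P)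
    \<longleftrightarrow> (\<forall>b. b \<notin> P \<longrightarrow> Q (principal_left_ideal b) \<longrightarrow>
          (\<forall>A. left_ideal A \<longrightarrow> set_prod A (principal_left_ideal b) \<subseteq> P \<longrightarrow> A \<subseteq> P))"
    (is "?products \<longleftrightarrow> ?principals")
proof
  assume ?products
  then show ?principals
    using left_ideal_principal_left_ideal self_in_principal_left_ideal by blast
next
  assume principals: ?principals
  show ?products
  proof (intro allI impI)
    fix A B :: "'a set"
    assume "left_ideal A" "left_ideal B" "set_prod A B \<subseteq> P" "Q B"
    show "A \<subseteq> P \<or> B \<subseteq> P"
    proof (cases "B \<subseteq> P")
      case False
      then obtain b where "b \<in> B" "b \<notin> P" by blast
      with \<open>left_ideal B\<close> have Rb: "principal_left_ideal b \<subseteq> B"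
        using principal_left_ideal_subset by blast
      then have "Q (principal_left_ideal b)"
        using Q_antimono \<open>left_ideal B\<close> \<open>Q B\<close> by blast
      moreover have "set_prod A (principal_left_ideal b) \<subseteq> P"
        using set_prod_mono[OF order_refl Rb] \<open>set_prod A B \<subseteq> P\<close> by blast
      ultimately show ?thesis
        using principals \<open>b \<notin> P\<close> \<open>left_ideal A\<close> by blast
    qed simp
  qed
qed

lemma rmult_subset_iff_subset_lcolon: "rmult P b \<subseteq> P \<longleftrightarrow> P \<subseteq> lcolon P b"
  unfolding rmult_def lcolon_def by blast

theorem proposition2p25:
  fixes P :: "'a::ring_1 set"
  assumes "left_ideal P" and "P \<noteq> UNIV"
  shows "(extremely_prime P \<longleftrightarrow> (\<forall>b. b \<notin> P \<longrightarrow> lcolon P b \<subseteq> P))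
     \<and> (completely_prime P \<longleftrightarrow>
          (\<forall>b. b \<notin> P \<longrightarrow> P \<subseteq> lcolon P b \<longrightarrow> lcolon P b = P))
     \<and> (structurally_prime P \<longleftrightarrow> (\<forall>b. b \<notin> P \<longrightarrow> id_part (lcolon P b) \<subseteq> P))
     \<and> (weakly_prime P \<longleftrightarrow>
          (\<forall>b. b \<notin> P \<longrightarrow> set_prod P UNIV \<subseteq> lcolon P b \<longrightarrow> id_part (lcolon P b) \<subseteq> P))"
proof (intro conjI)
  show "extremely_prime P \<longleftrightarrow> (\<forall>b. b \<notin> P \<longrightarrow> lcolon P b \<subseteq> P)"
    using assms unfolding extremely_prime_def lcolon_def by blast
  show "completely_prime P \<longleftrightarrow> (\<forall>b. b \<notin> P \<longrightarrow> P \<subseteq> lcolon P b \<longrightarrow> lcolon P b = P)"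
    using assms unfolding completely_prime_def rmult_subset_iff_subset_lcolon
    unfolding lcolon_def by blast
  have "structurally_prime P \<longleftrightarrow> (\<forall>A B. left_ideal A \<longrightarrow> left_ideal B \<longrightarrow>
      set_prod A B \<subseteq> P \<longrightarrow> True \<longrightarrow> A \<subseteq> P \<or> B \<subseteq> P)"
    using assms unfolding structurally_prime_def by simp
  also have "\<dots> \<longleftrightarrow> (\<forall>b. b \<notin> P \<longrightarrow> True \<longrightarrow>
      (\<forall>A. left_ideal A \<longrightarrow> set_prod A (principal_left_ideal b) \<subseteq> P \<longrightarrow> A \<subseteq> P))"
    by (rule product_condition_principal_iff)
  also have "\<dots> \<longleftrightarrow> (\<forall>b. b \<notin> P \<longrightarrow> id_part (lcolon P b) \<subseteq> P)"
    by (simp add: id_part_lcolon_subset_iff[OF assms(1)])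
  finally show "structurally_prime P \<longleftrightarrow> (\<forall>b. b \<notin> P \<longrightarrow> id_part (lcolon P b) \<subseteq> P)" .
  have "weakly_prime P \<longleftrightarrow> (\<forall>A B. left_ideal A \<longrightarrow> left_ideal B \<longrightarrow>
      set_prod A B \<subseteq> P \<longrightarrow> set_prod P B \<subseteq> P \<longrightarrow> A \<subseteq> P \<or> B \<subseteq> P)"
    using assms unfolding weakly_prime_def by simp
  also have "\<dots> \<longleftrightarrow> (\<forall>b. b \<notin> P \<longrightarrow> set_prod P (principal_left_ideal b) \<subseteq> P \<longrightarrow>
      (\<forall>A. left_ideal A \<longrightarrow> set_prod A (principal_left_ideal b) \<subseteq> P \<longrightarrow> A \<subseteq> P))"
    by (rule product_condition_principal_iff) (meson order_refl set_prod_mono subset_trans)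
  also have "\<dots> \<longleftrightarrow>
      (\<forall>b. b \<notin> P \<longrightarrow> set_prod P UNIV \<subseteq> lcolon P b \<longrightarrow> id_part (lcolon P b) \<subseteq> P)"
    by (simp add: id_part_lcolon_subset_iff[OF assms(1)] set_prod_principal_subset_iff[OF assms(1)])
  finally show "weakly_prime P \<longleftrightarrow>
      (\<forall>b. b \<notin> P \<longrightarrow> set_prod P UNIV \<subseteq> lcolon P b \<longrightarrow> id_part (lcolon P b) \<subseteq> P)" .
qed

end
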